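(* Let $W$ be a finite set of possible worlds and let $\bullet$ be an operator assigning to every pair $(G_1,G_2)$ of belief algebras on $W$ a belief algebra $G_1\bullet G_2$, satisfying the postulates (RA1)–(RA4) described in the context. Let $G_1=(2^W,\gg_1)$ and $G_2=(2^W,\gg_2)$ be complete belief algebras, and let $$\Lambda(G_1,G_2)=\{(\{\omega\},\{\omega'\})\mid \{\omega\}\gg_1\{\omega'\},\ I_2(\{\omega\})=I_2(\{\omega'\})\},$$ where $I_2$ denotes the support with respect to the backbone of $G_2$. Then $G_1\bullet G_2=\operatorname{Gen}(\Lambda(G_1,G_2)\cup G_2)$, and the result of revising $G_1$ by $G_2$ is unique.
   Context: $W$ is a finite nonempty set. Let $R_W=\{(U,V)\mid U,V\subseteq W,\ U\cap V=\varnothing\}$. A belief algebra on $W$ is a pair $(2^W,\gg)$, where $\gg$ is a binary relation on $2^W$ satisfying, for all $U,V,U_1,V_1,U_2,V_2\subseteq W$: (A0) $\gg\subseteq R_W$; (A1) $U\gg\varnothing$ iff $U\neq\varnothing$; (A2) if $U\gg V$ then not $V\gg U$; (A3) if $U_1\supseteq U$, $U\gg V$, $V\supseteq V_1$ and $U_1\cap V_1=\varnothing$, then $U_1\gg V_1$; (A4) if $U=U_1\cup V_1=U_2\cup V_2$, $U_1\gg V_1$ and $U_2\gg V_2$, then $U_1\cap U_2\gg V_1\cup V_2$. A belief algebra is identified with its relation $\gg$ viewed as a set of pairs; $(U,V)\in G$ means $U\gg V$, and $\subseteq,\cup,\cap$ refer to these sets of pairs. For $\Omega\subseteq R_W$,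 $\operatorname{Gen}(\Omega)$ is the smallest subset of $R_W$ containing $\Omega$ and closed under: (i) it contains $(U,\varnothing)$ for every nonempty $U\subseteq W$; (ii) if $(U,V)$ is in it, $U\subseteq U_1$, $V_1\subseteq V$, $U_1\cap V_1=\varnothing$, then $(U_1,V_1)$ is in it; (iii) if $U_1\cup V_1=U_2\cup V_2$ and $(U_1,V_1),(U_2,V_2)$ are in it, then $(U_1\cap U_2,V_1\cup V_2)$ is in it. For a total preorder $\preceq$ on $W$ (with $\omega\prec\omega'$ iff $\omega\preceq\omega'$ and not $\omega'\preceq\omega$), the relation $U\gg V$ iff $U\cap V=\varnothing$ and there is $\omega_1\in U$ with $\omega_1\prec\omega_2$ for all $\omega_2\in V$ is a belief algebra; those arising this way are complete belief algebras (CBAs). Every belief algebra $(2^W,\gg)$ has a unique backbone: a sequence $U_1,\dots,U_n$ of nonempty pairwise disjoint sets with union $W$, with $U_i\gg U_{i+1}$ for $i<n$, such that for each $i$ any two disjoint nonempty subsets of $U_i$ are incomparable under $\gg$. For nonempty $V\subseteq W$, its support $I(V)$ is $U_i$ for the least $i$ with $V\cap U_i\neq\varnothing$. Postulates (for all belief algebras $G_1=(2^W,\gg_1)$, $G_2=(2^W,\gg_2)$): (RA1) $G_2\subseteq G_1\bullet G_2$. (RA2) There is $\Omega\subseteq G_1\cup G_2$ with $G_1\bullet G_2=\operatorname{Gen}(\Omega)$. (RA3) If $G_1,G_2$ are CBAs, then $G_1\bullet G_2$ is a CBA. (RA4) If $G_1,G_2$ are CBAs and $I_2(\{\omega\})=I_2(\{\omega'\})$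 (support w.r.t. the backbone of $G_2$), then $(\{\omega\},\{\omega'\})\in G_1\bullet G_2$ iff $\{\omega\}\gg_1\{\omega'\}$. *)

theory Defs
  imports Main
begin

type_synonym 'a balg = "('a set \<times> 'a set) set"

definition R_W :: "'a set \<Rightarrow> 'a balg" where
  "R_W W = {(U, V). U \<subseteq> W \<and> V \<subseteq> W \<and> U \<inter> V = {}}"

definition belief_algebra :: "'a set \<Rightarrow> 'a balg \<Rightarrow> bool" where
  "belief_algebra W G \<longleftrightarrow>
     G \<subseteq> R_W W \<and>
     (\<forall>U. U \<subseteq> W \<longrightarrow> ((U, {}) \<in> G \<longleftrightarrow> U \<noteq> {})) \<and>
     (\<forall>U V. U \<subseteq> W \<longrightarrow> V \<subseteq> W \<longrightarrow> (U, V) \<in> G \<longrightarrow> (V, U) \<notin> G) \<and>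
     (\<forall>U V U1 V1. U \<subseteq> W \<longrightarrow> V \<subseteq> W \<longrightarrow> U1 \<subseteq> W \<longrightarrow> V1 \<subseteq> W \<longrightarrow>
        U \<subseteq> U1 \<longrightarrow> (U, V) \<in> G \<longrightarrow> V1 \<subseteq> V \<longrightarrow> U1 \<inter> V1 = {} \<longrightarrow> (U1, V1) \<in> G) \<and>
     (\<forall>U U1 V1 U2 V2. U \<subseteq> W \<longrightarrow> U1 \<subseteq> W \<longrightarrow> V1 \<subseteq> W \<longrightarrow> U2 \<subseteq> W \<longrightarrow> V2 \<subseteq> W \<longrightarrow>
        U = U1 \<union> V1 \<longrightarrow> U = U2 \<union> V2 \<longrightarrow> (U1, V1) \<in> G \<longrightarrow> (U2, V2) \<in> G \<longrightarrow>
        (U1 \<inter> U2, V1 \<union> V2) \<in> G)"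

inductive_set Gen :: "'a set \<Rightarrow> 'a balg \<Rightarrow> 'a balg" for W :: "'a set" and \<Omega> :: "'a balg" where
  base: "p \<in> \<Omega> \<Longrightarrow> p \<in> Gen W \<Omega>"
| empty: "U \<subseteq> W \<Longrightarrow> U \<noteq> {} \<Longrightarrow> (U, {}) \<in> Gen W \<Omega>"
| mono: "(U, V) \<in> Gen W \<Omega> \<Longrightarrow> U \<subseteq> U1 \<Longrightarrow> U1 \<subseteq> W \<Longrightarrow> V1 \<subseteq> V \<Longrightarrow> U1 \<inter> V1 = {}
          \<Longrightarrow> (U1, V1) \<in> Gen W \<Omega>"
| meet: "U1 \<union> V1 = U2 \<union> V2 \<Longrightarrow> (U1, V1) \<in> Gen W \<Omega> \<Longrightarrow> (U2, V2) \<in> Gen W \<Omega>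
          \<Longrightarrow> (U1 \<inter> U2, V1 \<union> V2) \<in> Gen W \<Omega>"

definition total_preorder_on :: "'a set \<Rightarrow> 'a rel \<Rightarrow> bool" where
  "total_preorder_on W r \<longleftrightarrow> r \<subseteq> W \<times> W \<and> refl_on W r \<and> trans r \<and> total_on W r"

definition alg_of_preorder :: "'a set \<Rightarrow> 'a rel \<Rightarrow> 'a balg" where
  "alg_of_preorder W r = {(U, V). U \<subseteq> W \<and> V \<subseteq> W \<and> U \<inter> V = {} \<and>
      (\<exists>w1\<in>U. \<forall>w2\<in>V. (w1, w2) \<in> r \<and> (w2, w1) \<notin> r)}"

definition CBA :: "'a set \<Rightarrow> 'a balg \<Rightarrow> bool" where
  "CBA W G \<longleftrightarrow> (\<exists>r. total_preorder_on W r \<and> G = alg_of_preorder W r)"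

definition is_backbone :: "'a set \<Rightarrow> 'a balg \<Rightarrow> 'a set list \<Rightarrow> bool" where
  "is_backbone W G Us \<longleftrightarrow>
     (\<forall>i < length Us. Us ! i \<noteq> {}) \<and>
     (\<forall>i < length Us. \<forall>j < length Us. i \<noteq> j \<longrightarrow> Us ! i \<inter> Us ! j = {}) \<and>
     \<Union>(set Us) = W \<and>
     (\<forall>i. Suc i < length Us \<longrightarrow> (Us ! i, Us ! Suc i) \<in> G) \<and>
     (\<forall>i < length Us. \<forall>X Y. X \<subseteq> Us ! i \<longrightarrow> Y \<subseteq> Us ! i \<longrightarrow> X \<noteq> {} \<longrightarrow> Y \<noteq> {} \<longrightarrow>
         X \<inter> Y = {} \<longrightarrow> (X, Y) \<notin> G \<and> (Y, X) \<notin> G)"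

definition backbone :: "'a set \<Rightarrow> 'a balg \<Rightarrow> 'a set list" where
  "backbone W G = (THE Us. is_backbone W G Us)"

definition support :: "'a set \<Rightarrow> 'a balg \<Rightarrow> 'a set \<Rightarrow> 'a set" where
  "support W G V = (let Us = backbone W G in
      Us ! (LEAST i. i < length Us \<and> V \<inter> Us ! i \<noteq> {}))"

definition RA1 :: "'a set \<Rightarrow> ('a balg \<Rightarrow> 'a balg \<Rightarrow> 'a balg) \<Rightarrow> bool" where
  "RA1 W rv \<longleftrightarrow> (\<forall>G1 G2. belief_algebra W G1 \<longrightarrow> belief_algebra W G2 \<longrightarrow> G2 \<subseteq> rv G1 G2)"

definition RA2 :: "'a set \<Rightarrow> ('a balg \<Rightarrow> 'a balg \<Rightarrow> 'a balg) \<Rightarrow> bool" where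
  "RA2 W rv \<longleftrightarrow> (\<forall>G1 G2. belief_algebra W G1 \<longrightarrow> belief_algebra W G2 \<longrightarrow>
      (\<exists>\<Omega>. \<Omega> \<subseteq> G1 \<union> G2 \<and> rv G1 G2 = Gen W \<Omega>))"

definition RA3 :: "'a set \<Rightarrow> ('a balg \<Rightarrow> 'a balg \<Rightarrow> 'a balg) \<Rightarrow> bool" where
  "RA3 W rv \<longleftrightarrow> (\<forall>G1 G2. CBA W G1 \<longrightarrow> CBA W G2 \<longrightarrow> CBA W (rv G1 G2))"

definition RA4 :: "'a set \<Rightarrow> ('a balg \<Rightarrow> 'a balg \<Rightarrow> 'a balg) \<Rightarrow> bool" where
  "RA4 W rv \<longleftrightarrow> (\<forall>G1 G2. CBA W G1 \<longrightarrow> CBA W G2 \<longrightarrow>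
      (\<forall>w\<in>W. \<forall>w'\<in>W. support W G2 {w} = support W G2 {w'} \<longrightarrow>
          (({w}, {w'}) \<in> rv G1 G2 \<longleftrightarrow> ({w}, {w'}) \<in> G1)))"

definition revision_operator :: "'a set \<Rightarrow> ('a balg \<Rightarrow> 'a balg \<Rightarrow> 'a balg) \<Rightarrow> bool" where
  "revision_operator W rv \<longleftrightarrow>
     (\<forall>G1 G2. belief_algebra W G1 \<longrightarrow> belief_algebra W G2 \<longrightarrow> belief_algebra W (rv G1 G2)) \<and>
     RA1 W rv \<and> RA2 W rv \<and> RA3 W rv \<and> RA4 W rv"

definition Lambda :: "'a set \<Rightarrow> 'a balg \<Rightarrow> 'a balg \<Rightarrow> 'a balg" where
  "Lambda W G1 G2 = {({w}, {w'}) | w w'. w \<in> W \<and> w' \<in> W \<and> ({w}, {w'}) \<in> G1 \<and>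
      support W G2 {w} = support W G2 {w'}}"

end

theory Submission
  imports Defs
begin

text \<open>Over a finite set of worlds a complete belief algebra is the algebra of a rank function
  f :: 'a \<Rightarrow> nat (U \<gg> V iff some world of U has smaller rank than every world of V), and the
  backbone of such an algebra is the list of its rank levels; so I2({w}) = I2({w'}) just says
  that w and w' have the same G2-rank. The result \<rho> of revising G1 by G2 is again
  a CBA containing G2, hence each U \<gg> V in \<rho> is generated by pairs {a} \<gg> {b} of \<rho>.
  Such a pair lies in G2 if a and b have different G2-ranks (otherwise {b} \<gg> {a} would
  be in G2 \<subseteq> \<rho>), and in \<Lambda>(G1, G2) by (RA4) if they have the same one. Conversely
  \<Lambda>(G1, G2) and G2 lie in \<rho> by (RA4) and (RA1), and Gen never leaves a belief algebra.
  So \<rho> depends on G1 and G2 only.\<close>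

lemma
  assumes "belief_algebra W G"
  shows belief_algebra_R_W: "(U, V) \<in> G \<Longrightarrow> U \<subseteq> W \<and> V \<subseteq> W \<and> U \<inter> V = {}"
    and belief_algebra_empty: "U \<subseteq> W \<Longrightarrow> U \<noteq> {} \<Longrightarrow> (U, {}) \<in> G"
    and belief_algebra_asym: "(U, V) \<in> G \<Longrightarrow> (V, U) \<notin> G"
    and belief_algebra_mono:
      "\<lbrakk>(U, V) \<in> G; U \<subseteq> U1; U1 \<subseteq> W; V1 \<subseteq> V; U1 \<inter> V1 = {}\<rbrakk> \<Longrightarrow> (U1, V1) \<in> G"
    and belief_algebra_meet:
      "\<lbrakk>(U1, V1) \<in> G; (U2, V2) \<in> G; U1 \<union> V1 = U2 \<union> V2\<rbrakk> \<Longrightarrow> (U1 \<inter> U2, V1 \<union> V2) \<in> G"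
proof -
  note ba = assms[unfolded belief_algebra_def]
  note A1 = ba[THEN conjunct2, THEN conjunct1, rule_format]
    and A2 = ba[THEN conjunct2, THEN conjunct2, THEN conjunct1, rule_format]
    and A3 = ba[THEN conjunct2, THEN conjunct2, THEN conjunct2, THEN conjunct1, rule_format]
    and A4 = ba[THEN conjunct2, THEN conjunct2, THEN conjunct2, THEN conjunct2, rule_format]
  show R_W: "U \<subseteq> W \<and> V \<subseteq> W \<and> U \<inter> V = {}" if "(U, V) \<in> G" for U V
    using ba[THEN conjunct1] that unfolding R_W_def by blast
  show "U \<subseteq> W \<Longrightarrow> U \<noteq> {} \<Longrightarrow> (U, {}) \<in> G"
    using A1 by simp
  show "(V, U) \<notin> G" if "(U, V) \<in> G"
    using A2 R_W[OF that] that by simp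
  show "(U1, V1) \<in> G" if "(U, V) \<in> G" "U \<subseteq> U1" "U1 \<subseteq> W" "V1 \<subseteq> V" "U1 \<inter> V1 = {}"
    by (rule A3[of U V U1 V1]) (use R_W[OF that(1)] that in auto)
  show "(U1 \<inter> U2, V1 \<union> V2) \<in> G" if "(U1, V1) \<in> G" "(U2, V2) \<in> G" "U1 \<union> V1 = U2 \<union> V2"
    by (rule A4[of "U1 \<union> V1" U1 V1 U2 V2]) (use R_W[OF that(1)] R_W[OF that(2)] that in auto)
qed

lemma
  assumes "is_backbone W G Us"
  shows is_backbone_nonempty: "i < length Us \<Longrightarrow> Us ! i \<noteq> {}"
    and is_backbone_subset: "i < length Us \<Longrightarrow> Us ! i \<subseteq> W"
    and is_backbone_cover: "w \<in> W \<Longrightarrow> \<exists>i < length Us. w \<in> Us ! i"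
    and is_backbone_chain: "Suc i < length Us \<Longrightarrow> (Us ! i, Us ! Suc i) \<in> G"
    and is_backbone_incomparable: "\<lbrakk>i < length Us; X \<subseteq> Us ! i; Y \<subseteq> Us ! i; X \<noteq> {}; Y \<noteq> {};
      X \<inter> Y = {}\<rbrakk> \<Longrightarrow> (X, Y) \<notin> G"
proof -
  note bb = assms[unfolded is_backbone_def]
  show "i < length Us \<Longrightarrow> Us ! i \<noteq> {}"
    using bb by simp
  show "i < length Us \<Longrightarrow> Us ! i \<subseteq> W"
    using bb by (metis Union_upper nth_mem)
  show "w \<in> W \<Longrightarrow> \<exists>i < length Us. w \<in> Us ! i"
    using bb by (metis Union_iff in_set_conv_nth)
  show "Suc i < length Us \<Longrightarrow> (Us ! i, Us ! Suc i) \<in> G"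
    using bb by simp
  show "\<lbrakk>i < length Us; X \<subseteq> Us ! i; Y \<subseteq> Us ! i; X \<noteq> {}; Y \<noteq> {}; X \<inter> Y = {}\<rbrakk>
      \<Longrightarrow> (X, Y) \<notin> G"
    using bb by simp
qed

lemma
  assumes "revision_operator W rv"
  shows revision_operator_belief_algebra:
      "belief_algebra W G1 \<Longrightarrow> belief_algebra W G2 \<Longrightarrow> belief_algebra W (rv G1 G2)"
    and revision_operator_RA1: "belief_algebra W G1 \<Longrightarrow> belief_algebra W G2 \<Longrightarrow> G2 \<subseteq> rv G1 G2"
    and revision_operator_RA3: "CBA W G1 \<Longrightarrow> CBA W G2 \<Longrightarrow> CBA W (rv G1 G2)"
    and revision_operator_RA4: "\<lbrakk>CBA W G1; CBA W G2; w \<in> W; w' \<in> W; support W G2 {w} = support W G2 {w'}\<rbrakk>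
      \<Longrightarrow> ({w}, {w'}) \<in> rv G1 G2 \<longleftrightarrow> ({w}, {w'}) \<in> G1"
  using assms unfolding revision_operator_def RA1_def RA3_def RA4_def by simp_all

section \<open>Complete belief algebras as rank algebras\<close>

definition preorder_rank :: "'a set \<Rightarrow> 'a rel \<Rightarrow> 'a \<Rightarrow> nat" where
  "preorder_rank W r w = card {v\<in>W. (v, w) \<in> r \<and> (w, v) \<notin> r}"

definition alg_of_rank :: "'a set \<Rightarrow> ('a \<Rightarrow> nat) \<Rightarrow> 'a balg" where
  "alg_of_rank W f =
     {(U, V). U \<subseteq> W \<and> V \<subseteq> W \<and> U \<inter> V = {} \<and> (\<exists>a\<in>U. \<forall>b\<in>V. f a < f b)}"

lemma preorder_rank_less_iff:
  assumes "total_preorder_on W r" "finite W" "a \<in> W" "b \<in> W"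
  shows "preorder_rank W r a < preorder_rank W r b \<longleftrightarrow> (a, b) \<in> r \<and> (b, a) \<notin> r"
proof -
  let ?below = "\<lambda>x. {v\<in>W. (v, x) \<in> r \<and> (x, v) \<notin> r}"
  have tr: "trans r" and refl: "refl_on W r" and tot: "total_on W r"
    using assms(1) unfolding total_preorder_on_def by auto
  have aa: "(a, a) \<in> r"
    using refl assms(3) by (simp add: refl_on_def)
  have ab: "(a, b) \<in> r \<or> (b, a) \<in> r"
    using tot aa assms(3,4) unfolding total_on_def by (cases "a = b") auto
  have below_mono: "?below x \<subseteq> ?below y" if "(x, y) \<in> r" for x y
    using that tr unfolding trans_def by blast
  show ?thesis
  proof
    assume less: "preorder_rank W r a < preorder_rank W r b"
    have "(b, a) \<notin> r"
    proof
      assume "(b, a) \<in> r"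
      then have "preorder_rank W r b \<le> preorder_rank W r a"
        unfolding preorder_rank_def using below_mono assms(2) by (intro card_mono) auto
      with less show False by simp
    qed
    with ab show "(a, b) \<in> r \<and> (b, a) \<notin> r" by blast
  next
    assume "(a, b) \<in> r \<and> (b, a) \<notin> r"
    then have "?below a \<subset> ?below b"
      using below_mono aa assms(3) by blast
    then show "preorder_rank W r a < preorder_rank W r b"
      unfolding preorder_rank_def using assms(2) by (simp add: psubset_card_mono)
  qed
qed

lemma CBA_obtains_alg_of_rank:
  assumes "finite W" "CBA W G"
  obtains f where "G = alg_of_rank W f"
proof -
  obtain r where r: "total_preorder_on W r" "G = alg_of_preorder W r"
    using assms(2) unfolding CBA_def by blast
  have "alg_of_preorder W r = alg_of_rank W (preorder_rank W r)"
    unfolding alg_of_preorder_def alg_of_rank_def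
  proof (intro set_eqI iffI; clarsimp)
    fix U V a assume "U \<subseteq> W" "V \<subseteq> W" "a \<in> U" "\<forall>b\<in>V. (a, b) \<in> r \<and> (b, a) \<notin> r"
    then show "\<exists>a\<in>U. \<forall>b\<in>V. preorder_rank W r a < preorder_rank W r b"
      using preorder_rank_less_iff[OF r(1) assms(1)] by blast
  next
    fix U V a assume "U \<subseteq> W" "V \<subseteq> W" "a \<in> U" "\<forall>b\<in>V. preorder_rank W r a < preorder_rank W r b"
    then show "\<exists>a\<in>U. \<forall>b\<in>V. (a, b) \<in> r \<and> (b, a) \<notin> r"
      using preorder_rank_less_iff[OF r(1) assms(1)] by blast
  qed
  with r(2) that show thesis by blast
qed

lemma alg_of_rank_least_witness:
  assumes "(U, V) \<in> alg_of_rank W f" "m \<in> U \<union> V" "\<forall>u\<in>U \<union> V. f m \<le> f u"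
  shows "m \<in> U" "\<forall>b\<in>V. f m < f b"
proof -
  obtain a where a: "a \<in> U" "\<forall>b\<in>V. f a < f b"
    using assms(1) unfolding alg_of_rank_def by blast
  have "f m \<le> f a"
    using assms(3) a(1) by blast
  with a(2) show "\<forall>b\<in>V. f m < f b"
    using le_less_trans by blast
  with assms(2) show "m \<in> U"
    by blast
qed

lemma belief_algebra_alg_of_rank: "belief_algebra W (alg_of_rank W f)"
  unfolding belief_algebra_def
proof (intro conjI allI impI)
  show "alg_of_rank W f \<subseteq> R_W W"
    unfolding alg_of_rank_def R_W_def by blast
next
  fix U :: "'a set"
  show "(U, {}) \<in> alg_of_rank W f \<longleftrightarrow> U \<noteq> {}" if "U \<subseteq> W"
    using that unfolding alg_of_rank_def by blast
next
  fix U V assume "(U, V) \<in> alg_of_rank W f"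
  then obtain a where "a \<in> U" "\<forall>b\<in>V. f a < f b"
    unfolding alg_of_rank_def by blast
  then show "(V, U) \<notin> alg_of_rank W f"
    unfolding alg_of_rank_def by (auto dest: less_asym)
next
  fix U V U1 V1 :: "'a set"
  assume "U1 \<subseteq> W" "V1 \<subseteq> W" "U \<subseteq> U1" "(U, V) \<in> alg_of_rank W f" "V1 \<subseteq> V" "U1 \<inter> V1 = {}"
  then show "(U1, V1) \<in> alg_of_rank W f"
    unfolding alg_of_rank_def by blast
next
  fix U U1 V1 U2 V2 :: "'a set"
  assume U: "U = U1 \<union> V1" "U = U2 \<union> V2"
    and in_alg: "(U1, V1) \<in> alg_of_rank W f" "(U2, V2) \<in> alg_of_rank W f"
  obtain u where "u \<in> U"
    using in_alg(1) U(1) unfolding alg_of_rank_def by blast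
  then obtain m where m: "m \<in> U" "\<forall>u\<in>U. f m \<le> f u"
    using ex_has_least_nat[of "\<lambda>u. u \<in> U" u f] by blast
  have "m \<in> U1 \<inter> U2" "\<forall>b\<in>V1 \<union> V2. f m < f b"
    using alg_of_rank_least_witness[OF in_alg(1), of m] alg_of_rank_least_witness[OF in_alg(2), of m]
      m U by auto
  then show "(U1 \<inter> U2, V1 \<union> V2) \<in> alg_of_rank W f"
    using in_alg unfolding alg_of_rank_def by blast
qed

lemma CBA_imp_belief_algebra:
  assumes "finite W" "CBA W G"
  shows "belief_algebra W G"
proof -
  obtain f where "G = alg_of_rank W f"
    using assms by (rule CBA_obtains_alg_of_rank)
  then show ?thesis
    by (simp add: belief_algebra_alg_of_rank)
qed

section \<open>The backbone of a rank algebra\<close>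

definition rank_levels :: "'a set \<Rightarrow> ('a \<Rightarrow> nat) \<Rightarrow> 'a set list" where
  "rank_levels W f = map (\<lambda>k. {w\<in>W. f w = k}) (sorted_list_of_set (f ` W))"

lemma alg_of_rank_level_incomparable:
  assumes "X \<subseteq> {w\<in>W. f w = k}" "Y \<subseteq> {w\<in>W. f w = k}" "Y \<noteq> {}"
  shows "(X, Y) \<notin> alg_of_rank W f"
proof
  assume "(X, Y) \<in> alg_of_rank W f"
  then obtain a where "a \<in> X" "\<forall>b\<in>Y. f a < f b"
    unfolding alg_of_rank_def by blast
  moreover obtain b where "b \<in> Y"
    using assms(3) by blast
  ultimately show False
    using assms(1,2) by fastforce
qed

lemma is_backbone_rank_levels:
  assumes "finite W"
  shows "is_backbone W (alg_of_rank W f) (rank_levels W f)"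
proof -
  define ks where "ks = sorted_list_of_set (f ` W)"
  have ks: "sorted_wrt (<) ks" "set ks = f ` W" "distinct ks"
    unfolding ks_def using assms by simp_all
  have levels: "rank_levels W f = map (\<lambda>k. {w\<in>W. f w = k}) ks"
    unfolding rank_levels_def ks_def ..
  have length_levels: "length (rank_levels W f) = length ks"
    unfolding levels by simp
  have level: "rank_levels W f ! i = {w\<in>W. f w = ks ! i}" if "i < length ks" for i
    unfolding levels using that by simp
  have level_nonempty: "rank_levels W f ! i \<noteq> {}" if "i < length ks" for i
  proof -
    have "ks ! i \<in> f ` W"
      using that ks(2) nth_mem by blast
    then obtain w where "w \<in> W" "f w = ks ! i"
      by (metis imageE)
    then show ?thesis
      unfolding level[OF that] by blast
  qed
  show ?thesis
    unfolding is_backbone_def length_levels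
  proof (intro conjI allI impI)
    show "rank_levels W f ! i \<noteq> {}" if "i < length ks" for i
      using level_nonempty that .
  next
    fix i j assume "i < length ks" "j < length ks" "i \<noteq> j"
    then have "ks ! i \<noteq> ks ! j"
      using ks(3) by (simp add: nth_eq_iff_index_eq)
    then show "rank_levels W f ! i \<inter> rank_levels W f ! j = {}"
      unfolding level[OF \<open>i < length ks\<close>] level[OF \<open>j < length ks\<close>] by auto
  next
    show "\<Union> (set (rank_levels W f)) = W"
      unfolding levels using ks(2) by auto
  next
    fix i assume i: "Suc i < length ks"
    then have i': "i < length ks"
      by simp
    have less: "ks ! i < ks ! Suc i"
      using ks(1) i by (simp add: sorted_wrt_iff_nth_less)
    obtain a where "a \<in> W" "f a = ks ! i"
      using level_nonempty[OF i'] unfolding level[OF i'] by blast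
    with less show "(rank_levels W f ! i, rank_levels W f ! Suc i) \<in> alg_of_rank W f"
      unfolding level[OF i] level[OF i'] alg_of_rank_def by auto
  next
    fix i X Y assume "i < length ks" "X \<subseteq> rank_levels W f ! i" "Y \<subseteq> rank_levels W f ! i"
      "X \<noteq> {}" "Y \<noteq> {}"
    then show "(X, Y) \<notin> alg_of_rank W f" "(Y, X) \<notin> alg_of_rank W f"
      unfolding level[OF \<open>i < length ks\<close>] by (simp_all add: alg_of_rank_level_incomparable)
  qed
qed

lemma is_backbone_alg_of_rank_same_block:
  assumes bb: "is_backbone W (alg_of_rank W f) Us"
    and i: "i < length Us" and ab: "a \<in> Us ! i" "b \<in> Us ! i"
  shows "f a = f b"
proof (rule ccontr)
  assume "f a \<noteq> f b"
  moreover have "a \<in> W" "b \<in> W"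
    using is_backbone_subset[OF bb i] ab by auto
  ultimately have "({a}, {b}) \<in> alg_of_rank W f \<or> ({b}, {a}) \<in> alg_of_rank W f"
    unfolding alg_of_rank_def by (auto simp: linorder_neq_iff)
  moreover have "({a}, {b}) \<notin> alg_of_rank W f" "({b}, {a}) \<notin> alg_of_rank W f"
    using is_backbone_incomparable[OF bb i, of "{a}" "{b}"] is_backbone_incomparable[OF bb i, of "{b}" "{a}"]
      ab \<open>f a \<noteq> f b\<close> by auto
  ultimately show False
    by blast
qed

lemma is_backbone_alg_of_rank_earlier_block:
  assumes bb: "is_backbone W (alg_of_rank W f) Us"
    and "i < j" "j < length Us" "a \<in> Us ! i" "b \<in> Us ! j"
  shows "f a < f b"
  using assms(2-5)
proof (induction j arbitrary: b)
  case (Suc j)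
  obtain c where c: "c \<in> Us ! j" "\<forall>b\<in>Us ! Suc j. f c < f b"
    using is_backbone_chain[OF bb Suc.prems(2)] unfolding alg_of_rank_def by blast
  have "f a \<le> f c"
  proof (cases "i = j")
    case True
    then show ?thesis
      using is_backbone_alg_of_rank_same_block[OF bb, of j a c] Suc.prems(2,3) c(1) by simp
  next
    case False
    then show ?thesis
      using Suc.IH[OF _ _ Suc.prems(3) c(1)] Suc.prems(1,2) by simp
  qed
  with c(2) Suc.prems(4) show ?case
    by fastforce
qed simp

lemma is_backbone_alg_of_rank_unique:
  assumes "finite W" and bb: "is_backbone W (alg_of_rank W f) Us"
  shows "Us = rank_levels W f"
proof -
  define rank_of where "rank_of U = f (SOME a. a \<in> U)" for U
  have rank_of: "f a = rank_of (Us ! i)" if "i < length Us" "a \<in> Us ! i" for i a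
  proof -
    have "(SOME a. a \<in> Us ! i) \<in> Us ! i"
      using that(2) by (rule someI)
    then show ?thesis
      unfolding rank_of_def by (rule is_backbone_alg_of_rank_same_block[OF bb that])
  qed
  have some_elem: "\<exists>a. a \<in> Us ! i" if "i < length Us" for i
    using is_backbone_nonempty[OF bb that] by blast
  have level: "{w\<in>W. f w = rank_of (Us ! i)} = Us ! i" if i: "i < length Us" for i
  proof
    show "Us ! i \<subseteq> {w\<in>W. f w = rank_of (Us ! i)}"
      using is_backbone_subset[OF bb i] rank_of[OF i] by auto
  next
    show "{w\<in>W. f w = rank_of (Us ! i)} \<subseteq> Us ! i"
    proof
      fix w assume w: "w \<in> {w\<in>W. f w = rank_of (Us ! i)}"
      then obtain j where j: "j < length Us" "w \<in> Us ! j"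
        using is_backbone_cover[OF bb] by blast
      obtain a where a: "a \<in> Us ! i"
        using some_elem[OF i] by blast
      have "f a = f w"
        using rank_of[OF i a] w by simp
      then have "\<not> i < j" "\<not> j < i"
        using is_backbone_alg_of_rank_earlier_block[OF bb _ j(1) a j(2)]
          is_backbone_alg_of_rank_earlier_block[OF bb _ i j(2) a] by auto
      with j show "w \<in> Us ! i"
        by (metis linorder_neqE_nat)
    qed
  qed
  have "sorted_wrt (<) (map rank_of Us)"
  proof (unfold sorted_wrt_iff_nth_less, intro allI impI)
    fix i j assume ij: "i < j" "j < length (map rank_of Us)"
    then obtain a b where ab: "a \<in> Us ! i" "b \<in> Us ! j"
      using some_elem by fastforce
    have "f a < f b"
      using is_backbone_alg_of_rank_earlier_block[OF bb ij(1) _ ab] ij(2) by simp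
    then show "map rank_of Us ! i < map rank_of Us ! j"
      using rank_of[of i a] rank_of[of j b] ij ab by simp
  qed
  moreover have "set (map rank_of Us) = f ` W"
  proof (intro equalityI subsetI)
    fix x assume "x \<in> set (map rank_of Us)"
    then obtain i where i: "i < length Us" "x = rank_of (Us ! i)"
      by (auto simp: in_set_conv_nth)
    obtain a where a: "a \<in> Us ! i"
      using some_elem[OF i(1)] by blast
    then have "x = f a"
      using rank_of[OF i(1) a] i(2) by simp
    with a show "x \<in> f ` W"
      using is_backbone_subset[OF bb i(1)] by auto
  next
    fix x assume "x \<in> f ` W"
    then obtain w where "w \<in> W" "x = f w"
      by blast
    moreover obtain j where "j < length Us" "w \<in> Us ! j"
      using is_backbone_cover[OF bb \<open>w \<in> W\<close>] by blast
    ultimately show "x \<in> set (map rank_of Us)"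
      using rank_of nth_mem by auto
  qed
  ultimately have "sorted_list_of_set (f ` W) = map rank_of Us"
    using assms(1) by (intro strict_sorted_equal) simp_all
  moreover have "map (\<lambda>U. {w\<in>W. f w = rank_of U}) Us = Us"
    by (rule nth_equalityI) (simp_all add: level)
  ultimately show ?thesis
    unfolding rank_levels_def by (simp add: comp_def)
qed

lemma backbone_alg_of_rank:
  assumes "finite W"
  shows "backbone W (alg_of_rank W f) = rank_levels W f"
  unfolding backbone_def
  by (intro the_equality is_backbone_rank_levels[OF assms] is_backbone_alg_of_rank_unique[OF assms])

lemma support_alg_of_rank_singleton:
  assumes "finite W" "w \<in> W"
  shows "support W (alg_of_rank W f) {w} = {v\<in>W. f v = f w}"
proof -
  define ks where "ks = sorted_list_of_set (f ` W)"
  have levels: "rank_levels W f = map (\<lambda>k. {v\<in>W. f v = k}) ks"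
    unfolding rank_levels_def ks_def ..
  let ?P = "\<lambda>i. i < length (rank_levels W f) \<and> {w} \<inter> rank_levels W f ! i \<noteq> {}"
  obtain i where "i < length ks" "ks ! i = f w"
    using assms by (metis ks_def finite_imageI imageI in_set_conv_nth set_sorted_list_of_set)
  then have "?P i"
    using levels assms(2) by auto
  then have "?P (LEAST i. ?P i)"
    by (rule LeastI)
  then show ?thesis
    unfolding support_def backbone_alg_of_rank[OF assms(1)] Let_def levels by auto
qed

section \<open>Generated algebras\<close>

lemma Gen_subset:
  assumes "belief_algebra W G" "\<Omega> \<subseteq> G"
  shows "Gen W \<Omega> \<subseteq> G"
proof
  fix p assume "p \<in> Gen W \<Omega>"
  then show "p \<in> G"
  proof (induction rule: Gen.induct)
    case (base p)
    then show ?case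
      using assms(2) by blast
  next
    case (empty U)
    then show ?case
      by (rule belief_algebra_empty[OF assms(1)])
  next
    case (mono U V U1 V1)
    then show ?case
      by (auto intro: belief_algebra_mono[OF assms(1), of U V])
  next
    case (meet U1 V1 U2 V2)
    then show ?case
      using belief_algebra_meet[OF assms(1)] by blast
  qed
qed

lemma Gen_of_singleton_pairs:
  assumes "finite V" "a \<in> U" "U \<subseteq> W" "V \<subseteq> W" "U \<inter> V = {}"
    and "\<forall>b\<in>V. ({a}, {b}) \<in> Gen W \<Omega>"
  shows "(U, V) \<in> Gen W \<Omega>"
  using assms
proof (induction V arbitrary: U rule: finite_induct)
  case empty
  then show ?case
    by (intro Gen.empty) auto
next
  case (insert v V)
  have "(U \<union> {v}, V) \<in> Gen W \<Omega>"
    using insert.hyps(2) insert.prems by (intro insert.IH) auto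
  moreover have "(U \<union> V, {v}) \<in> Gen W \<Omega>"
    by (rule Gen.mono[of "{a}" "{v}"]) (use insert.hyps(2) insert.prems in auto)
  \<comment> \<open>both pairs split the same set U \<union> V \<union> {v}, so (iii) applies\<close>
  ultimately have "((U \<union> {v}) \<inter> (U \<union> V), V \<union> {v}) \<in> Gen W \<Omega>"
    by (rule Gen.meet[rotated 1]) auto
  moreover have "(U \<union> {v}) \<inter> (U \<union> V) = U" "V \<union> {v} = insert v V"
    using insert.hyps(2) insert.prems(4) by auto
  ultimately show ?case
    by simp
qed

section \<open>Revising a complete belief algebra\<close>

lemma alg_of_rank_singleton_pairs:
  assumes "(U, V) \<in> alg_of_rank W f"
  shows "\<exists>a\<in>U. \<forall>b\<in>V. ({a}, {b}) \<in> alg_of_rank W f"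
proof -
  obtain a where "a \<in> U" "\<forall>b\<in>V. f a < f b" "U \<subseteq> W" "V \<subseteq> W"
    using assms unfolding alg_of_rank_def by blast
  then show ?thesis
    unfolding alg_of_rank_def by auto
qed

lemma singleton_pair_in_alg_of_rank:
  assumes "belief_algebra W R" "alg_of_rank W f \<subseteq> R" "({a}, {b}) \<in> R" "f a \<noteq> f b"
  shows "({a}, {b}) \<in> alg_of_rank W f"
proof -
  have ab: "a \<in> W" "b \<in> W"
    using belief_algebra_R_W[OF assms(1,3)] by auto
  have "({b}, {a}) \<notin> alg_of_rank W f"
    using belief_algebra_asym[OF assms(1,3)] assms(2) by blast
  then have "\<not> f b < f a"
    using ab unfolding alg_of_rank_def by auto
  with ab assms(4) show ?thesis
    unfolding alg_of_rank_def by auto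
qed

lemma Gen_Lambda_subset_revision:
  assumes "finite W" "revision_operator W rv" "CBA W G1" "CBA W G2"
  shows "Gen W (Lambda W G1 G2 \<union> G2) \<subseteq> rv G1 G2"
proof (rule Gen_subset)
  have ba: "belief_algebra W G1" "belief_algebra W G2"
    using assms(1,3,4) by (simp_all add: CBA_imp_belief_algebra)
  then show "belief_algebra W (rv G1 G2)"
    by (rule revision_operator_belief_algebra[OF assms(2)])
  have "Lambda W G1 G2 \<subseteq> rv G1 G2"
    unfolding Lambda_def using revision_operator_RA4[OF assms(2-4)] by auto
  with revision_operator_RA1[OF assms(2) ba] show "Lambda W G1 G2 \<union> G2 \<subseteq> rv G1 G2"
    by simp
qed

lemma revision_subset_Gen_Lambda:
  assumes fin: "finite W" and rv: "revision_operator W rv" and c: "CBA W G1" "CBA W G2"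
  shows "rv G1 G2 \<subseteq> Gen W (Lambda W G1 G2 \<union> G2)"
proof (rule subrelI)
  fix U V assume UV: "(U, V) \<in> rv G1 G2"
  have ba: "belief_algebra W G1" "belief_algebra W G2"
    using fin c by (simp_all add: CBA_imp_belief_algebra)
  note ba_rv = revision_operator_belief_algebra[OF rv ba]
    and G2_sub = revision_operator_RA1[OF rv ba]
  obtain f2 where f2: "G2 = alg_of_rank W f2"
    using fin c(2) by (rule CBA_obtains_alg_of_rank)
  obtain h where h: "rv G1 G2 = alg_of_rank W h"
    using fin revision_operator_RA3[OF rv c] by (rule CBA_obtains_alg_of_rank)
  obtain a where a: "a \<in> U" "\<forall>b\<in>V. ({a}, {b}) \<in> rv G1 G2"
    using alg_of_rank_singleton_pairs[of U V W h] UV h by auto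
  have UV_W: "U \<subseteq> W" "V \<subseteq> W" "U \<inter> V = {}"
    using belief_algebra_R_W[OF ba_rv UV] by auto
  have "({a}, {b}) \<in> Lambda W G1 G2 \<union> G2" if b: "b \<in> V" for b
  proof (cases "f2 a = f2 b")
    case True
    have ab: "a \<in> W" "b \<in> W"
      using a(1) b UV_W by auto
    then have "support W G2 {a} = support W G2 {b}"
      unfolding f2 using fin True by (simp add: support_alg_of_rank_singleton)
    then have "({a}, {b}) \<in> G1"
      using revision_operator_RA4[OF rv c ab] a(2) b by simp
    then show ?thesis
      unfolding Lambda_def using ab \<open>support W G2 {a} = support W G2 {b}\<close> by auto
  next
    case False
    then show ?thesis
      using singleton_pair_in_alg_of_rank[of W "rv G1 G2" f2 a b] ba_rv G2_sub f2 a(2) b by simp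
  qed
  then show "(U, V) \<in> Gen W (Lambda W G1 G2 \<union> G2)"
    using Gen_of_singleton_pairs[OF finite_subset[OF UV_W(2) fin] a(1) UV_W] by (simp add: Gen.base)
qed

theorem theorem4:
  fixes W :: "'a set" and rv :: "'a balg \<Rightarrow> 'a balg \<Rightarrow> 'a balg" and G1 G2 :: "'a balg"
  assumes "finite W" and "W \<noteq> {}"
    and "revision_operator W rv"
    and "CBA W G1" and "CBA W G2"
  shows "rv G1 G2 = Gen W (Lambda W G1 G2 \<union> G2) \<and>
         (\<forall>rv'. revision_operator W rv' \<longrightarrow> rv' G1 G2 = rv G1 G2)"
proof -
  have revision_eq: "rv' G1 G2 = Gen W (Lambda W G1 G2 \<union> G2)" if "revision_operator W rv'" for rv'
  proof
    show "rv' G1 G2 \<subseteq> Gen W (Lambda W G1 G2 \<union> G2)"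
      using assms(1) that assms(4,5) by (rule revision_subset_Gen_Lambda)
    show "Gen W (Lambda W G1 G2 \<union> G2) \<subseteq> rv' G1 G2"
      using assms(1) that assms(4,5) by (rule Gen_Lambda_subset_revision)
  qed
  then show ?thesis
    using revision_eq[OF assms(3)] by auto
qed

end
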